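(* Let $\alpha,\beta$ be real numbers with $\alpha>\beta-1>0$, and set $a=\frac{\alpha-\beta+1}{2}$, \[ I(\alpha,\beta)=\int_{-\infty}^{\infty}\frac{|\sin t|^{\alpha}}{|t|^{\beta}}\,dt,\qquad \phi(\alpha,\beta)=\frac{\alpha^{a}\,\Gamma(\alpha+1)}{\Gamma(a+\alpha+1)}, \] where $\Gamma$ is the gamma function. Then \[ \left(\frac{6}{\alpha}\right)^{a}\Gamma(a)\,\phi(\alpha,\beta)\;\le\; I(\alpha,\beta)\;\le\;\left(\frac{6}{\alpha}\right)^{a}\Gamma(a)\left\{1+\frac{1}{\beta-1}\right\}. \] In particular, if $\beta=\alpha>1$, then \[ \sqrt{\frac{6}{\alpha}}\,\frac{\sqrt{\alpha}\,\Gamma(\alpha+1)}{\Gamma(\alpha+\frac32)}\sqrt{\pi}\;\le\; I(\alpha,\alpha)\;\le\;\sqrt{\frac{6}{\alpha}}\,\sqrt{\pi}\left\{1+\frac{1}{\alpha-1}\right\}. \] *)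

theory Defs
  imports "HOL-Analysis.Analysis"
begin

definition sinInt :: "real \<Rightarrow> real \<Rightarrow> real" where
  "sinInt \<alpha> \<beta> = (LINT t|lborel. \<bar>sin t\<bar> powr \<alpha> / \<bar>t\<bar> powr \<beta>)"

definition phiAB :: "real \<Rightarrow> real \<Rightarrow> real" where
  "phiAB \<alpha> \<beta> = (let a = (\<alpha> - \<beta> + 1) / 2 in
     \<alpha> powr a * Gamma (\<alpha> + 1) / Gamma (a + \<alpha> + 1))"

end

theory Submission
  imports Defs
begin

text \<open>
  On [0, pi] one has sin s <= s exp(-s^2/6), so on the first period the integrand is dominated
  by s^(alpha - beta) exp(-alpha s^2/6), whose integral over (0, oo) is (6/alpha)^a Gamma(a) / 2
  after the substitution u = alpha s^2/6. On the k-th period (k pi, (k+1) pi] the integrand is at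
  most (k+1)^(-beta) times its value on the first one, and the sum of (k+1)^(-beta) is at most
  beta/(beta-1). For the lower bound, sin t >= t (1 - t^2/6) on [0, sqrt 6], and the same kind of
  substitution turns the resulting integral into the Beta integral 6^a B(a, alpha+1) / 2, which
  equals (6/alpha)^a Gamma(a) phi(alpha, beta) / 2. The integrand is even, which accounts for the
  remaining factor 2.
\<close>

lemma x_mult_cos_le_sin:
  fixes x :: real assumes "0 \<le> x" "x \<le> pi" shows "x * cos x \<le> sin x"
proof -
  let ?g = "\<lambda>y. sin y - y * cos y"
  have "?g 0 \<le> ?g x"
  proof (rule deriv_nonneg_imp_mono[where g = ?g and g' = "\<lambda>y. y * sin y"])
    fix y assume "y \<in> {0..x}"
    then show "(?g has_real_derivative y * sin y) (at y)" and "0 \<le> y * sin y"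
      using assms by (auto intro!: derivative_eq_intros mult_nonneg_nonneg sin_ge_zero)
  qed (use assms in auto)
  then show ?thesis by simp
qed

lemma x_mult_cos_plus_square_sin_le_sin:
  fixes x :: real assumes "0 \<le> x" "x \<le> pi" shows "x * cos x + x\<^sup>2 * sin x / 3 \<le> sin x"
proof -
  let ?g = "\<lambda>y. sin y - y * cos y - y\<^sup>2 * sin y / 3"
  let ?g' = "\<lambda>y. y / 3 * (sin y - y * cos y)"
  have "?g 0 \<le> ?g x"
  proof (rule deriv_nonneg_imp_mono[where g = ?g and g' = ?g'])
    fix y assume "y \<in> {0..x}"
    show "(?g has_real_derivative ?g' y) (at y)"
      by (rule derivative_eq_intros refl | simp)+ (simp add: algebra_simps power2_eq_square)
    from \<open>y \<in> {0..x}\<close> assms show "0 \<le> ?g' y"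
      using x_mult_cos_le_sin[of y] by auto
  qed (use assms in auto)
  then show ?thesis by simp
qed

lemma exp_square_mult_cos_plus_sin_le_one:
  fixes x :: real assumes "0 \<le> x" "x \<le> pi"
  shows "exp (x\<^sup>2 / 6) * (cos x + x / 3 * sin x) \<le> 1"
proof -
  let ?g = "\<lambda>y. - (exp (y\<^sup>2 / 6) * (cos y + y / 3 * sin y))"
  let ?g' = "\<lambda>y. exp (y\<^sup>2 / 6) / 9 * (6 * (sin y - y * cos y - y\<^sup>2 * sin y / 3) + y\<^sup>2 * sin y)"
  have "?g 0 \<le> ?g x"
  proof (rule deriv_nonneg_imp_mono[where g = ?g and g' = ?g'])
    fix y assume y: "y \<in> {0..x}"
    show "(?g has_real_derivative ?g' y) (at y)"
      by (rule derivative_eq_intros refl | simp)+ (simp add: algebra_simps power2_eq_square)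
    show "0 \<le> ?g' y"
      using y assms x_mult_cos_plus_square_sin_le_sin[of y] sin_ge_zero[of y]
      by (intro mult_nonneg_nonneg add_nonneg_nonneg) auto
  qed (use assms in auto)
  then show ?thesis by simp
qed

lemma sin_le_mult_exp_neg_square:
  fixes x :: real assumes "0 \<le> x" "x \<le> pi" shows "sin x \<le> x * exp (- x\<^sup>2 / 6)"
proof -
  let ?g = "\<lambda>y. y - sin y * exp (y\<^sup>2 / 6)"
  let ?g' = "\<lambda>y. 1 - exp (y\<^sup>2 / 6) * (cos y + y / 3 * sin y)"
  have "?g 0 \<le> ?g x"
  proof (rule deriv_nonneg_imp_mono[where g = ?g and g' = ?g'])
    fix y assume "y \<in> {0..x}"
    show "(?g has_real_derivative ?g' y) (at y)"
      by (rule derivative_eq_intros refl | simp)+ (simp add: algebra_simps power2_eq_square)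
    from \<open>y \<in> {0..x}\<close> assms show "0 \<le> ?g' y"
      using exp_square_mult_cos_plus_sin_le_one[of y] by auto
  qed (use assms in auto)
  then have "sin x * exp (x\<^sup>2 / 6) * exp (- x\<^sup>2 / 6) \<le> x * exp (- x\<^sup>2 / 6)"
    by (intro mult_right_mono) auto
  then show ?thesis by (simp add: mult.assoc flip: exp_add)
qed

lemma one_minus_square_le_cos:
  fixes x :: real shows "1 - x\<^sup>2 / 2 \<le> cos x"
proof -
  let ?g = "\<lambda>y. cos y - 1 + y\<^sup>2 / 2"
  have "?g 0 \<le> ?g \<bar>x\<bar>"
  proof (rule deriv_nonneg_imp_mono[where g = ?g and g' = "\<lambda>y. y - sin y"])
    fix y assume "y \<in> {0..\<bar>x\<bar>}"
    then show "(?g has_real_derivative y - sin y) (at y)" and "0 \<le> y - sin y"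
      using sin_x_le_x[of y] by (auto intro!: derivative_eq_intros)
  qed auto
  then show ?thesis by simp
qed

lemma minus_cube_le_sin:
  fixes x :: real assumes "0 \<le> x" shows "x - x ^ 3 / 6 \<le> sin x"
proof -
  let ?g = "\<lambda>y. sin y - y + y ^ 3 / 6"
  have "?g 0 \<le> ?g x"
  proof (rule deriv_nonneg_imp_mono[where g = ?g and g' = "\<lambda>y. cos y - 1 + y\<^sup>2 / 2"])
    fix y assume "y \<in> {0..x}"
    show "(?g has_real_derivative cos y - 1 + y\<^sup>2 / 2) (at y)"
      by (auto intro!: derivative_eq_intros simp: power2_eq_square)
    show "0 \<le> cos y - 1 + y\<^sup>2 / 2"
      using one_minus_square_le_cos[of y] by simp
  qed (use assms in auto)
  then show ?thesis by simp
qed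

lemma powr_neg_le_diff_powr:
  fixes b x :: real assumes "1 < b" "0 < x"
  shows "(b - 1) * (x + 1) powr (- b) \<le> x powr (1 - b) - (x + 1) powr (1 - b)"
proof -
  define y where "y = x / (x + 1)"
  have y: "0 < y" "y - 1 = - 1 / (x + 1)"
    using assms by (auto simp: y_def field_simps)
  have split_power: "(x + 1) powr (1 - b) = (x + 1) * (x + 1) powr (- b)"
    using assms by (simp add: powr_diff powr_minus field_simps)
  have "1 + (b - 1) / (x + 1) = 1 + (1 - b) * (y - 1)"
    using assms unfolding y(2) by (simp add: field_simps)
  also have "\<dots> \<le> 1 + (1 - b) * ln y"
    using ln_le_minus_one[OF y(1)] assms by (simp add: mult_left_mono_neg)
  also have "\<dots> \<le> y powr (1 - b)"
    using exp_ge_add_one_self[of "(1 - b) * ln y"] y by (simp add: powr_def mult.commute)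
  finally have "(1 + (b - 1) / (x + 1)) * (x + 1) powr (1 - b)
      \<le> y powr (1 - b) * (x + 1) powr (1 - b)"
    by (rule mult_right_mono) simp
  also have "\<dots> = x powr (1 - b)"
    using assms by (simp add: y_def powr_divide)
  also have "(1 + (b - 1) / (x + 1)) * (x + 1) powr (1 - b)
      = (x + 1) powr (1 - b) + (b - 1) * (x + 1) powr (- b)"
    using assms unfolding split_power by (simp add: field_simps)
  finally show ?thesis by simp
qed

lemma sum_powr_neg_le:
  fixes b :: real assumes "1 < b"
  shows "(\<Sum>k<n. (real k + 1) powr (- b)) \<le> b / (b - 1)"
proof -
  have telescope: "(\<Sum>k<n. (real k + 1) powr (- b)) + real n powr (1 - b) / (b - 1) \<le> b / (b - 1)"
    if "1 \<le> n" for n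
    using that
  proof (induction n rule: dec_induct)
    case base
    then show ?case using assms by (simp add: field_simps)
  next
    case (step n)
    have "(real n + 1) powr (- b) \<le> (real n powr (1 - b) - (real n + 1) powr (1 - b)) / (b - 1)"
      using powr_neg_le_diff_powr[OF assms, of "real n"] assms step.hyps
      by (simp add: le_divide_eq mult.commute)
    with step.IH show ?case by (simp add: diff_divide_distrib add.commute)
  qed
  show ?thesis
  proof (cases "n = 0")
    case False
    have "0 \<le> real n powr (1 - b) / (b - 1)"
      using assms by simp
    with False show ?thesis using telescope[of n] by linarith
  qed (use assms in simp)
qed

lemma nn_integral_substitution_atLeast:
  fixes f g g' :: "real \<Rightarrow> real"
  assumes [measurable]: "f \<in> borel_measurable borel" "g \<in> borel_measurable borel"
      "g' \<in> borel_measurable borel"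
    and derivg: "\<And>x. a \<le> x \<Longrightarrow> (g has_real_derivative g' x) (at x)"
    and contg': "continuous_on {a..} g'"
    and derivg_nonneg: "\<And>x. a \<le> x \<Longrightarrow> 0 \<le> g' x"
    and g_at_top: "filterlim g at_top at_top"
  shows "(\<integral>\<^sup>+x. f x * indicator {g a..} x \<partial>lborel)
    = (\<integral>\<^sup>+x. f (g x) * g' x * indicator {a..} x \<partial>lborel)"
proof -
  define b where "b n = a + real n" for n :: nat
  have mono_g: "g x \<le> g y" if "a \<le> x" "x \<le> y" for x y
    using derivg derivg_nonneg that by (intro deriv_nonneg_imp_mono[where g = g and g' = g']) auto
  have mono_gb: "g (b m) \<le> g (b n)" if "m \<le> n" for m n
    using that by (intro mono_g) (auto simp: b_def)
  have "filterlim b at_top sequentially"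
    unfolding b_def
    by (intro filterlim_tendsto_add_at_top[OF tendsto_const] filterlim_real_sequentially)
  then have gb_at_top: "filterlim (\<lambda>n. g (b n)) at_top sequentially"
    by (rule filterlim_compose[OF g_at_top])
  have SUP_indicator:
    "(SUP n. ennreal (h x * indicator {c..u n} x)) = ennreal (h x * indicator {c..} x)"
    if u_at_top: "filterlim u at_top sequentially"
    for h :: "real \<Rightarrow> real" and c x and u :: "nat \<Rightarrow> real"
  proof (rule antisym)
    show "(SUP n. ennreal (h x * indicator {c..u n} x)) \<le> ennreal (h x * indicator {c..} x)"
      by (intro SUP_least) (auto simp: indicator_def)
    obtain n where "x \<le> u n"
      using u_at_top unfolding filterlim_at_top eventually_sequentially by blast
    then show "ennreal (h x * indicator {c..} x) \<le> (SUP n. ennreal (h x * indicator {c..u n} x))"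
      by (intro SUP_upper2[of n]) (auto simp: indicator_def)
  qed
  have "(\<integral>\<^sup>+x. f x * indicator {g a..} x \<partial>lborel)
      = (\<integral>\<^sup>+x. (SUP n. ennreal (f x * indicator {g a..g (b n)} x)) \<partial>lborel)"
    by (simp add: SUP_indicator[OF gb_at_top])
  also have "\<dots> = (SUP n. \<integral>\<^sup>+x. f x * indicator {g a..g (b n)} x \<partial>lborel)"
    by (rule nn_integral_monotone_convergence_SUP)
       (auto simp: incseq_def le_fun_def indicator_def intro!: ennreal_leI dest: mono_gb)
  also have "\<dots> = (SUP n. \<integral>\<^sup>+x. f (g x) * g' x * indicator {a..b n} x \<partial>lborel)"
    using contg' derivg derivg_nonneg
    by (intro SUP_cong refl nn_integral_substitution)
       (auto simp: b_def set_borel_measurable_def intro: continuous_on_subset)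
  also have "\<dots>
      = (\<integral>\<^sup>+x. (SUP n. ennreal (f (g x) * g' x * indicator {a..b n} x)) \<partial>lborel)"
    by (rule nn_integral_monotone_convergence_SUP[symmetric])
       (auto simp: incseq_def le_fun_def b_def indicator_def intro!: ennreal_leI)
  also have "\<dots> = (\<integral>\<^sup>+x. f (g x) * g' x * indicator {a..} x \<partial>lborel)"
    by (simp add: SUP_indicator[OF \<open>filterlim b at_top sequentially\<close>, of "\<lambda>x. f (g x) * g' x"])
  finally show ?thesis .
qed

text \<open>The case \<open>t = 0\<close> holds only because \<open>0 powr x = 0\<close> for every exponent.\<close>

lemma powr_eq_scaled_square_powr:
  fixes a c t :: real assumes "0 < c" "0 \<le> t"
  shows "t powr (2 * a - 1) = (c * t\<^sup>2) powr (a - 1) * (2 * c * t) / (2 * c powr a)"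
proof (cases "t = 0")
  case False
  with assms have t: "0 < t" by simp
  have "(c * t\<^sup>2) powr (a - 1) = c powr (a - 1) * t powr (2 * a - 2)"
    using assms t by (simp add: powr_mult powr_powr algebra_simps flip: powr_numeral)
  moreover have "c powr a = c powr (a - 1) * c" "t powr (2 * a - 1) = t powr (2 * a - 2) * t"
    using powr_add[of c "a - 1" 1] powr_add[of t "2 * a - 2" 1] assms t by simp_all
  ultimately show ?thesis
    using assms by (simp add: field_simps)
qed simp

lemma scaled_square_has_real_derivative: "((\<lambda>t. c * t\<^sup>2) has_real_derivative 2 * c * x) (at x)"
  by (auto intro!: derivative_eq_intros)

lemma nn_integral_powr_exp_neg_square:
  fixes a c :: real assumes "0 < a" "0 < c"
  shows "(\<integral>\<^sup>+t. t powr (2 * a - 1) * exp (- (c * t\<^sup>2)) * indicator {0..} t \<partial>lborel)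
    = ennreal (Gamma a / (2 * c powr a))"
proof -
  define f where "f u = u powr (a - 1) * exp (- u)" for u :: real
  have [measurable]: "f \<in> borel_measurable borel"
    unfolding f_def by measurable
  have "filterlim (\<lambda>t. c * t\<^sup>2) at_top at_top"
    using assms by (intro filterlim_tendsto_pos_mult_at_top[OF tendsto_const]
        filterlim_pow_at_top filterlim_ident) auto
  then have substitution: "(\<integral>\<^sup>+u. f u * indicator {0..} u \<partial>lborel)
      = (\<integral>\<^sup>+t. f (c * t\<^sup>2) * (2 * c * t) * indicator {0..} t \<partial>lborel)"
    using nn_integral_substitution_atLeast[of f "\<lambda>t. c * t\<^sup>2" "\<lambda>t. 2 * c * t" 0]
      scaled_square_has_real_derivative assms
    by (auto simp: continuous_on_mult_left)
  have "(\<integral>\<^sup>+t. t powr (2 * a - 1) * exp (- (c * t\<^sup>2)) * indicator {0..} t \<partial>lborel)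
      = (\<integral>\<^sup>+t. ennreal (1 / (2 * c powr a)) * (f (c * t\<^sup>2) * (2 * c * t) * indicator {0..} t)
          \<partial>lborel)"
    using assms
    by (intro nn_integral_cong)
       (auto simp: f_def powr_eq_scaled_square_powr[of c] indicator_def simp flip: ennreal_mult')
  also have "\<dots> = ennreal (1 / (2 * c powr a)) * (\<integral>\<^sup>+u. f u * indicator {0..} u \<partial>lborel)"
    by (simp add: substitution nn_integral_cmult)
  also have "(\<integral>\<^sup>+u. f u * indicator {0..} u \<partial>lborel) = Gamma a"
    using assms
    by (auto simp: Gamma_conv_nn_integral_real f_def exp_minus field_simps intro!: nn_integral_cong)
  finally show ?thesis
    using assms by (simp flip: ennreal_mult')
qed

lemma nn_integral_powr_one_minus_square:
  fixes a b c :: real assumes "0 < a" "0 < b" "0 < c"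
  shows "(\<integral>\<^sup>+t. t powr (2 * a - 1) * (1 - c * t\<^sup>2) powr (b - 1) * indicator {0..1 / sqrt c} t
      \<partial>lborel) = ennreal (Beta a b / (2 * c powr a))"
proof -
  define f where "f u = u powr (a - 1) * (1 - u) powr (b - 1)" for u :: real
  have [measurable]: "f \<in> borel_measurable borel"
    unfolding f_def by measurable
  have substitution: "(\<integral>\<^sup>+u. f u * indicator {0..1} u \<partial>lborel)
      = (\<integral>\<^sup>+t. f (c * t\<^sup>2) * (2 * c * t) * indicator {0..1 / sqrt c} t \<partial>lborel)"
    using nn_integral_substitution[where f = f and g = "\<lambda>t. c * t\<^sup>2" and g' = "\<lambda>t. 2 * c * t"
        and a = 0 and b = "1 / sqrt c"] scaled_square_has_real_derivative assms
    by (auto simp: set_borel_measurable_def power_divide continuous_on_mult_left)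
  have "(\<integral>\<^sup>+t. t powr (2 * a - 1) * (1 - c * t\<^sup>2) powr (b - 1) * indicator {0..1 / sqrt c} t
        \<partial>lborel)
      = (\<integral>\<^sup>+t. ennreal (1 / (2 * c powr a))
          * (f (c * t\<^sup>2) * (2 * c * t) * indicator {0..1 / sqrt c} t) \<partial>lborel)"
    using assms
    by (intro nn_integral_cong)
       (auto simp: f_def powr_eq_scaled_square_powr[of c] indicator_def simp flip: ennreal_mult')
  also have "\<dots> = ennreal (1 / (2 * c powr a)) * (\<integral>\<^sup>+u. f u * indicator {0..1} u \<partial>lborel)"
    by (simp add: substitution nn_integral_cmult)
  also have "(\<integral>\<^sup>+u. f u * indicator {0..1} u \<partial>lborel) = Beta a b"
    using nn_integral_has_integral_lebesgue[OF _ has_integral_Beta_real[OF assms(1,2)]]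
    by (simp add: f_def mult.commute)
  finally show ?thesis
    using assms by (simp add: Beta_def flip: ennreal_mult')
qed

lemma nn_integral_even_function:
  fixes f :: "real \<Rightarrow> ennreal"
  assumes [measurable]: "f \<in> borel_measurable borel" and even: "\<And>x. f (- x) = f x"
  shows "(\<integral>\<^sup>+x. f x \<partial>lborel) = 2 * (\<integral>\<^sup>+x. f x * indicator {0<..} x \<partial>lborel)"
proof -
  have "(\<integral>\<^sup>+x. f x \<partial>lborel) = (\<integral>\<^sup>+x. f x * indicator {0<..} x + f x * indicator {..<0} x \<partial>lborel)"
    by (intro nn_integral_cong_AE, use AE_lborel_singleton[of 0] in eventually_elim)
       (auto simp: indicator_def)
  also have "\<dots>
      = (\<integral>\<^sup>+x. f x * indicator {0<..} x \<partial>lborel) + (\<integral>\<^sup>+x. f x * indicator {..<0} x \<partial>lborel)"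
    by (rule nn_integral_add) measurable
  also have "(\<integral>\<^sup>+x. f x * indicator {..<0} x \<partial>lborel) = (\<integral>\<^sup>+x. f x * indicator {0<..} x \<partial>lborel)"
    using nn_integral_real_affine[of "\<lambda>x. f x * indicator {..<0} x" "-1" 0]
    by (simp add: even indicator_def)
  finally show ?thesis
    by (simp add: mult_2)
qed

lemma nn_integral_Ioi_eq_suminf_shifts:
  fixes f :: "real \<Rightarrow> ennreal" and p :: real
  assumes [measurable]: "f \<in> borel_measurable borel" and p: "0 < p"
  shows "(\<integral>\<^sup>+t. f t * indicator {0<..} t \<partial>lborel)
    = (\<Sum>k. \<integral>\<^sup>+s. f (real k * p + s) * indicator {0<..p} s \<partial>lborel)"
proof -
  define B where "B k = {real k * p <.. (real k + 1) * p}" for k :: nat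
  have "\<exists>k. t \<in> B k" if "0 < t" for t
  proof
    define m where "m = nat \<lceil>t / p\<rceil>"
    have "0 < t / p"
      using that p by simp
    then have "1 \<le> m" "real m = of_int \<lceil>t / p\<rceil>"
      unfolding m_def by linarith+
    moreover have "t / p \<le> real m" "real m - 1 < t / p"
      using \<open>real m = of_int \<lceil>t / p\<rceil>\<close> by linarith+
    then have "t \<le> real m * p" "(real m - 1) * p < t"
      using p by (simp_all add: pos_divide_le_eq pos_less_divide_eq)
    ultimately show "t \<in> B (m - 1)"
      by (simp add: B_def algebra_simps)
  qed
  moreover have "0 < t" if "t \<in> B k" for t k
    using that p by (auto simp: B_def intro: le_less_trans[of 0 "real k * p"])
  ultimately have union: "(\<Union>k. B k) = {0<..}"
    by blast
  have "k = l" if "t \<in> B k" "t \<in> B l" for t k l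
  proof -
    have "real k * p < (real l + 1) * p" "real l * p < (real k + 1) * p"
      using that by (auto simp: B_def)
    then show ?thesis
      using p by (simp add: mult_less_cancel_right_pos)
  qed
  then have "disjoint_family B"
    unfolding disjoint_family_on_def by blast
  then have "(\<integral>\<^sup>+t. f t * indicator {0<..} t \<partial>lborel)
      = (\<Sum>k. \<integral>\<^sup>+t. f t * indicator (B k) t \<partial>lborel)"
    using nn_integral_disjoint_family[of f lborel B, unfolded union] by (simp add: B_def)
  moreover have "(\<integral>\<^sup>+t. f t * indicator (B k) t \<partial>lborel)
      = (\<integral>\<^sup>+s. f (real k * p + s) * indicator {0<..p} s \<partial>lborel)" for k
    using nn_integral_real_affine[of "\<lambda>t. f t * indicator (B k) t" 1 "real k * p"]
    by (simp add: B_def indicator_def algebra_simps)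
  ultimately show ?thesis
    by simp
qed

lemma sin_powr_div_powr_shift_le:
  fixes \<alpha> \<beta> s :: real
  assumes "0 \<le> \<beta>" "0 < s" "s \<le> pi"
  shows "\<bar>sin (real k * pi + s)\<bar> powr \<alpha> / \<bar>real k * pi + s\<bar> powr \<beta>
    \<le> (real k + 1) powr (- \<beta>) * (\<bar>sin s\<bar> powr \<alpha> / s powr \<beta>)"
proof -
  have pos: "0 < real k * pi + s"
    using assms by (simp add: add_nonneg_pos)
  have "\<bar>sin (real k * pi + s)\<bar> = \<bar>sin s\<bar>"
    by (simp add: sin_add abs_mult)
  moreover have "(real k + 1) powr \<beta> * s powr \<beta> \<le> \<bar>real k * pi + s\<bar> powr \<beta>"
    using assms
    by (auto simp: algebra_simps simp flip: powr_mult intro!: powr_mono2 mult_right_mono)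
  ultimately have "\<bar>sin (real k * pi + s)\<bar> powr \<alpha> / \<bar>real k * pi + s\<bar> powr \<beta>
      \<le> \<bar>sin s\<bar> powr \<alpha> / ((real k + 1) powr \<beta> * s powr \<beta>)"
    using assms pos by (auto intro!: divide_left_mono)
  then show ?thesis
    by (simp add: powr_minus divide_inverse mult_ac)
qed

lemma sin_powr_div_powr_le_exp:
  fixes \<alpha> \<beta> s :: real
  assumes "0 \<le> \<alpha>" "0 < s" "s \<le> pi"
  shows "\<bar>sin s\<bar> powr \<alpha> / s powr \<beta> \<le> s powr (\<alpha> - \<beta>) * exp (- (\<alpha> / 6 * s\<^sup>2))"
proof -
  have "\<bar>sin s\<bar> powr \<alpha> \<le> (s * exp (- s\<^sup>2 / 6)) powr \<alpha>"
    using assms sin_le_mult_exp_neg_square[of s] sin_ge_zero[of s] by (intro powr_mono2) auto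
  also have "\<dots> = s powr \<alpha> * exp (- (\<alpha> / 6 * s\<^sup>2))"
    using assms by (simp add: powr_mult exp_powr_real algebra_simps)
  finally show ?thesis
    using assms by (simp add: powr_diff divide_right_mono)
qed

lemma powr_one_minus_square_le_sin_powr_div_powr:
  fixes \<alpha> \<beta> t :: real
  assumes "0 \<le> \<alpha>" "0 \<le> t" "t \<le> sqrt 6"
  shows "t powr (\<alpha> - \<beta>) * (1 - t\<^sup>2 / 6) powr \<alpha> \<le> \<bar>sin t\<bar> powr \<alpha> / \<bar>t\<bar> powr \<beta>"
proof (cases "t = 0")
  case False
  have "t\<^sup>2 \<le> 6"
    using assms by (metis real_sqrt_le_iff real_sqrt_abs abs_of_nonneg)
  then have "0 \<le> t * (1 - t\<^sup>2 / 6)"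
    using assms by simp
  moreover have "t * (1 - t\<^sup>2 / 6) \<le> sin t"
    using assms minus_cube_le_sin[of t] by (simp add: algebra_simps power3_eq_cube power2_eq_square)
  ultimately have "t powr \<alpha> * (1 - t\<^sup>2 / 6) powr \<alpha> \<le> \<bar>sin t\<bar> powr \<alpha>"
    using assms by (simp add: powr_mono2 flip: powr_mult)
  with False assms show ?thesis
    by (simp add: powr_diff divide_right_mono)
qed simp

lemma nn_integral_sin_powr_div_powr_lower:
  fixes \<alpha> \<beta> :: real
  assumes "\<beta> - 1 < \<alpha>" "0 \<le> \<alpha>"
  defines "a \<equiv> (\<alpha> - \<beta> + 1) / 2"
  shows "ennreal (6 powr a * Beta a (\<alpha> + 1) / 2)
    \<le> (\<integral>\<^sup>+t. ennreal (\<bar>sin t\<bar> powr \<alpha> / \<bar>t\<bar> powr \<beta>) * indicator {0<..} t \<partial>lborel)"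
proof -
  have a: "0 < a" and exponent: "2 * a - 1 = \<alpha> - \<beta>"
    using assms by (simp_all add: a_def field_simps)
  have "ennreal (6 powr a * Beta a (\<alpha> + 1) / 2)
      = (\<integral>\<^sup>+t. t powr (2 * a - 1) * (1 - 1 / 6 * t\<^sup>2) powr (\<alpha> + 1 - 1)
          * indicator {0..1 / sqrt (1 / 6)} t \<partial>lborel)"
    using nn_integral_powr_one_minus_square[of a "\<alpha> + 1" "1 / 6"] a assms(2)
    by (simp add: powr_divide mult_ac)
  also have "\<dots> \<le> (\<integral>\<^sup>+t. ennreal (\<bar>sin t\<bar> powr \<alpha> / \<bar>t\<bar> powr \<beta>) * indicator {0<..} t \<partial>lborel)"
    using powr_one_minus_square_le_sin_powr_div_powr[of \<alpha> _ \<beta>] assms(2)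
    by (intro nn_integral_mono) (auto simp: exponent indicator_def real_sqrt_divide)
  finally show ?thesis .
qed

lemma nn_integral_sin_powr_div_powr_upper:
  fixes \<alpha> \<beta> :: real
  assumes "\<beta> - 1 < \<alpha>" "1 < \<beta>"
  defines "a \<equiv> (\<alpha> - \<beta> + 1) / 2"
  shows "(\<integral>\<^sup>+t. ennreal (\<bar>sin t\<bar> powr \<alpha> / \<bar>t\<bar> powr \<beta>) * indicator {0<..} t \<partial>lborel)
    \<le> ennreal (\<beta> / (\<beta> - 1) * ((6 / \<alpha>) powr a * Gamma a / 2))"
proof -
  have a: "0 < a" and \<alpha>: "0 < \<alpha>" and exponent: "2 * a - 1 = \<alpha> - \<beta>"
    using assms by (simp_all add: a_def field_simps)
  define F where "F t = \<bar>sin t\<bar> powr \<alpha> / \<bar>t\<bar> powr \<beta>" for t :: real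
  have [measurable]: "F \<in> borel_measurable borel"
    unfolding F_def by measurable
  define Q where "Q = (\<integral>\<^sup>+s. ennreal (F s) * indicator {0<..pi} s \<partial>lborel)"
  have period_le: "(\<integral>\<^sup>+s. ennreal (F (real k * pi + s)) * indicator {0<..pi} s \<partial>lborel)
      \<le> ennreal ((real k + 1) powr (- \<beta>)) * Q" for k
  proof -
    have "(\<integral>\<^sup>+s. ennreal (F (real k * pi + s)) * indicator {0<..pi} s \<partial>lborel)
        \<le> (\<integral>\<^sup>+s. ennreal ((real k + 1) powr (- \<beta>)) * (ennreal (F s) * indicator {0<..pi} s)
            \<partial>lborel)"
      using sin_powr_div_powr_shift_le[of \<beta> _ k \<alpha>] assms
      by (intro nn_integral_mono)
         (auto simp: F_def indicator_def simp flip: ennreal_mult intro!: ennreal_leI)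
    then show ?thesis
      by (simp add: Q_def nn_integral_cmult)
  qed
  have zeta_le: "(\<Sum>k. ennreal ((real k + 1) powr (- \<beta>))) \<le> ennreal (\<beta> / (\<beta> - 1))"
    using sum_powr_neg_le[OF assms(2)] by (intro suminf_le_const summableI) (simp add: ennreal_leI)
  have "Q \<le> (\<integral>\<^sup>+s. s powr (2 * a - 1) * exp (- (\<alpha> / 6 * s\<^sup>2)) * indicator {0..} s \<partial>lborel)"
    unfolding Q_def using sin_powr_div_powr_le_exp[of \<alpha> _ \<beta>] \<alpha>
    by (intro nn_integral_mono) (auto simp: F_def exponent indicator_def intro!: ennreal_leI)
  also have "\<dots> = ennreal ((6 / \<alpha>) powr a * Gamma a / 2)"
    using nn_integral_powr_exp_neg_square[of a "\<alpha> / 6"] a \<alpha> by (simp add: powr_divide field_simps)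
  finally have Q_le: "Q \<le> ennreal ((6 / \<alpha>) powr a * Gamma a / 2)" .
  have "(\<integral>\<^sup>+t. ennreal (F t) * indicator {0<..} t \<partial>lborel)
      = (\<Sum>k. \<integral>\<^sup>+s. ennreal (F (real k * pi + s)) * indicator {0<..pi} s \<partial>lborel)"
    by (rule nn_integral_Ioi_eq_suminf_shifts) (auto simp: F_def)
  also have "\<dots> \<le> (\<Sum>k. ennreal ((real k + 1) powr (- \<beta>)) * Q)"
    by (intro suminf_le summableI period_le)
  also have "\<dots> \<le> ennreal (\<beta> / (\<beta> - 1)) * ennreal ((6 / \<alpha>) powr a * Gamma a / 2)"
    unfolding ennreal_suminf_multc by (intro mult_mono zeta_le Q_le) auto
  finally show ?thesis
    using assms by (simp add: F_def flip: ennreal_mult)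
qed

lemma sinInt_bounds:
  fixes \<alpha> \<beta> :: real
  assumes "\<beta> - 1 < \<alpha>" "1 < \<beta>"
  defines "a \<equiv> (\<alpha> - \<beta> + 1) / 2"
  shows "integrable lborel (\<lambda>t. \<bar>sin t\<bar> powr \<alpha> / \<bar>t\<bar> powr \<beta>)"
    and "(6 / \<alpha>) powr a * Gamma a * phiAB \<alpha> \<beta> \<le> sinInt \<alpha> \<beta>"
    and "sinInt \<alpha> \<beta> \<le> (6 / \<alpha>) powr a * Gamma a * (1 + 1 / (\<beta> - 1))"
proof -
  define F where "F t = \<bar>sin t\<bar> powr \<alpha> / \<bar>t\<bar> powr \<beta>" for t :: real
  define N where "N = (\<integral>\<^sup>+t. ennreal (F t) \<partial>lborel)"
  have a: "0 < a" and \<alpha>: "0 < \<alpha>"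
    using assms by (simp_all add: a_def)
  have halves: "N = 2 * (\<integral>\<^sup>+t. ennreal (F t) * indicator {0<..} t \<partial>lborel)"
    unfolding N_def by (rule nn_integral_even_function) (auto simp: F_def)
  have "N \<le> 2 * ennreal (\<beta> / (\<beta> - 1) * ((6 / \<alpha>) powr a * Gamma a / 2))"
    unfolding halves F_def a_def using assms(1,2)
    by (intro mult_left_mono nn_integral_sin_powr_div_powr_upper) auto
  also have "\<dots> = ennreal ((6 / \<alpha>) powr a * Gamma a * (1 + 1 / (\<beta> - 1)))"
    using assms(2) a \<alpha> by (simp add: field_simps flip: ennreal_mult ennreal_numeral)
  finally have upper: "N \<le> ennreal ((6 / \<alpha>) powr a * Gamma a * (1 + 1 / (\<beta> - 1)))" .
  have "ennreal (6 powr a * Beta a (\<alpha> + 1)) = 2 * ennreal (6 powr a * Beta a (\<alpha> + 1) / 2)"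
    using a \<alpha> by (simp add: Beta_def flip: ennreal_mult ennreal_numeral)
  also have "\<dots> \<le> N"
    unfolding halves F_def a_def using assms(1,2)
    by (intro mult_left_mono nn_integral_sin_powr_div_powr_lower) auto
  finally have lower: "ennreal (6 powr a * Beta a (\<alpha> + 1)) \<le> N" .
  have "phiAB \<alpha> \<beta> = \<alpha> powr a * Gamma (\<alpha> + 1) / Gamma (a + (\<alpha> + 1))"
    by (simp add: phiAB_def Let_def a_def add.assoc)
  then have phi: "(6 / \<alpha>) powr a * Gamma a * phiAB \<alpha> \<beta> = 6 powr a * Beta a (\<alpha> + 1)"
    using \<alpha> by (simp add: Beta_def powr_divide field_simps)
  obtain r where r: "N = ennreal r" "0 \<le> r"
    using upper by (cases N) (auto simp: top_unique)
  show "integrable lborel (\<lambda>t. \<bar>sin t\<bar> powr \<alpha> / \<bar>t\<bar> powr \<beta>)"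
    using r by (intro integrableI_nonneg) (auto simp: N_def F_def)
  moreover have "sinInt \<alpha> \<beta> = r"
    using r unfolding sinInt_def by (subst integral_eq_nn_integral) (auto simp: N_def F_def)
  ultimately show "(6 / \<alpha>) powr a * Gamma a * phiAB \<alpha> \<beta> \<le> sinInt \<alpha> \<beta>"
    and "sinInt \<alpha> \<beta> \<le> (6 / \<alpha>) powr a * Gamma a * (1 + 1 / (\<beta> - 1))"
    using lower upper r \<alpha> a assms(2) by (simp_all add: phi Beta_def)
qed

theorem mainTheorem4:
  fixes \<alpha> \<beta> :: real
  shows "(\<alpha> > \<beta> - 1 \<and> \<beta> - 1 > 0 \<longrightarrow>
      (let a = (\<alpha> - \<beta> + 1) / 2 in
        integrable lborel (\<lambda>t. \<bar>sin t\<bar> powr \<alpha> / \<bar>t\<bar> powr \<beta>) \<and>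
        (6 / \<alpha>) powr a * Gamma a * phiAB \<alpha> \<beta> \<le> sinInt \<alpha> \<beta> \<and>
        sinInt \<alpha> \<beta> \<le> (6 / \<alpha>) powr a * Gamma a * (1 + 1 / (\<beta> - 1))))
   \<and> (\<alpha> > 1 \<longrightarrow>
        sqrt (6 / \<alpha>) * (sqrt \<alpha> * Gamma (\<alpha> + 1) / Gamma (\<alpha> + 3 / 2)) * sqrt pi
          \<le> sinInt \<alpha> \<alpha> \<and>
        sinInt \<alpha> \<alpha> \<le> sqrt (6 / \<alpha>) * sqrt pi * (1 + 1 / (\<alpha> - 1)))"
proof -
  have phiAB_diagonal: "phiAB \<alpha> \<alpha> = sqrt \<alpha> * Gamma (\<alpha> + 1) / Gamma (\<alpha> + 3 / 2)" if "1 < \<alpha>"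
    using that by (simp add: phiAB_def powr_half_sqrt add_ac)
  show ?thesis
    using sinInt_bounds[of \<beta> \<alpha>] sinInt_bounds(2,3)[of \<alpha> \<alpha>] phiAB_diagonal
    by (auto simp: Let_def powr_half_sqrt Gamma_one_half_real mult_ac)
qed

end
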